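(* Let $a_n$ be the number of $n$-multisets of $[n]$ with no consecutive integers. Then \[\sum_{n\geq 1} a_n z^n \;=\; \frac{1-3z-\sqrt{1-2z-3z^2}}{6z-2}.\]
   Context: An $n$-multiset of $[n]=\{1,\dots,n\}$ is identified with the non-decreasing sequence $\pi_1\leq\pi_2\leq\cdots\leq\pi_n$ of its elements (elements may repeat). It has no consecutive integers if $\pi_{i+1}\neq\pi_i+1$ for all $i\in[n-1]$. *)

theory Defs
  imports Complex_Main "HOL-Library.Multiset"
begin

text \<open>An n-multiset of [n] is a multiset of size n with elements in {1..n}; it is
identified with its non-decreasing sequence of elements (sorted_list_of_multiset).\<close>

definition no_consecutive :: "nat multiset \<Rightarrow> bool" where
  "no_consecutive M \<longleftrightarrow>
     (let \<pi> = sorted_list_of_multiset M in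
      \<forall>i. Suc i < length \<pi> \<longrightarrow> \<pi> ! (Suc i) \<noteq> \<pi> ! i + 1)"

definition a_seq :: "nat \<Rightarrow> nat" where
  "a_seq n = card {M :: nat multiset. size M = n \<and> set_mset M \<subseteq> {1..n} \<and> no_consecutive M}"

end

theory Submission
  imports Defs "HOL-Analysis.FPS_Convergence"
begin

text \<open>
  Group the multisets by their support S. For the multiset to have no consecutive integers, S
  must be a k-subset of [n] without two consecutive elements; there are C(n+1-k, k) of these.
  The multisets of size n with support exactly S are S plus an arbitrary multiset of size n-k on
  S, so there are C(n-1, k-1) of them. Hence a_n = sum_k C(n+1-k, k) C(n-1, k-1).

  Zeilberger's algorithm yields the recurrence (n+1) a_(n+1) = 2 (n+1) a_n + 3 (n-1) a_(n-1),
  which is verified through an explicit telescoping certificate. For U = 1 + 2 sum_n a_n z^n the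
  recurrence is the differential equation (1 - 2z - 3z^2) U' = 2 U, so V = U^2 (1 - 3z) satisfies
  (1 + z) V' = V and V(0) = 1, i.e. U^2 (1 - 3z) = 1 + z as formal power series. Near 0 the sum
  of the series is positive, hence it equals sqrt(1 - 2z - 3z^2) / (1 - 3z), and solving for
  sum_n a_n z^n gives the closed form.
\<close>

lemma successively_not_Suc_iff_sorted:
  assumes "sorted xs"
  shows "successively (\<lambda>x y. y \<noteq> Suc x) xs \<longleftrightarrow> (\<forall>x\<in>set xs. Suc x \<notin> set xs)"
  using assms
proof (induction "\<lambda>x y. y \<noteq> Suc x" xs rule: successively.induct)
  case (3 x y xs)
  have "x \<le> y" "\<forall>z\<in>set xs. y \<le> z" "\<forall>z\<in>set xs. x \<le> z"
    using "3.prems" by auto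
  then have "Suc x \<notin> set xs" if "y \<noteq> Suc x" "Suc y \<notin> set xs"
    using that by (metis le_SucE le_antisym)
  with 3 \<open>x \<le> y\<close> \<open>\<forall>z\<in>set xs. x \<le> z\<close> show ?case by force
qed auto

lemma no_consecutive_iff: "no_consecutive M \<longleftrightarrow> (\<forall>x\<in>#M. Suc x \<notin># M)"
  using successively_not_Suc_iff_sorted[of "sorted_list_of_multiset M"]
  by (simp add: no_consecutive_def successively_conv_nth)

definition sparse_sets :: "nat \<Rightarrow> nat \<Rightarrow> nat set set" where
  "sparse_sets m k = {S. S \<subseteq> {1..m} \<and> card S = k \<and> (\<forall>x\<in>S. Suc x \<notin> S)}"

lemma sparse_sets_0: "sparse_sets m 0 = {{}}"
  by (auto simp: sparse_sets_def finite_subset)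

lemma finite_sparse_sets: "finite (sparse_sets m k)"
  by (rule finite_subset[of _ "Pow {1..m}"]) (auto simp: sparse_sets_def)

lemma sparse_sets_Suc_Suc:
  "sparse_sets (Suc (Suc m)) (Suc k) =
     sparse_sets (Suc m) (Suc k) \<union> insert (Suc (Suc m)) ` sparse_sets m k"
    (is "?L = ?A \<union> ?B")
proof
  show "?L \<subseteq> ?A \<union> ?B"
  proof
    fix S assume S: "S \<in> ?L"
    show "S \<in> ?A \<union> ?B"
    proof (cases "Suc (Suc m) \<in> S")
      case False
      then have "S \<subseteq> {1..Suc m}" using S by (force simp: sparse_sets_def le_Suc_eq)
      then show ?thesis using S by (simp add: sparse_sets_def)
    next
      case True
      then have "Suc m \<notin> S" using S by (auto simp: sparse_sets_def)
      then have "S - {Suc (Suc m)} \<subseteq> {1..m}" using S by (force simp: sparse_sets_def le_Suc_eq)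
      moreover have "finite S" using S by (auto simp: sparse_sets_def intro: finite_subset)
      ultimately have "S - {Suc (Suc m)} \<in> sparse_sets m k"
        using S True by (auto simp: sparse_sets_def)
      then show ?thesis using True by (auto intro!: image_eqI[where x = "S - {Suc (Suc m)}"])
    qed
  qed
next
  show "?A \<union> ?B \<subseteq> ?L"
  proof
    fix S assume "S \<in> ?A \<union> ?B"
    then show "S \<in> ?L"
    proof
      assume "S \<in> ?A" then show ?thesis by (auto simp: sparse_sets_def)
    next
      assume "S \<in> ?B"
      then obtain T where T: "T \<in> sparse_sets m k" and S: "S = insert (Suc (Suc m)) T" by blast
      have "finite T" "Suc (Suc m) \<notin> T" "Suc m \<notin> T"
        using T by (auto simp: sparse_sets_def intro: finite_subset)
      then show ?thesis using T unfolding S sparse_sets_def by auto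
    qed
  qed
qed

lemma card_sparse_sets_Suc_Suc:
  "card (sparse_sets (Suc (Suc m)) (Suc k))
     = card (sparse_sets (Suc m) (Suc k)) + card (sparse_sets m k)"
proof -
  have "Suc (Suc m) \<notin> T" if "T \<in> sparse_sets m k" for T
    using that by (auto simp: sparse_sets_def)
  then have "inj_on (insert (Suc (Suc m))) (sparse_sets m k)"
    by (metis inj_onI Diff_insert_absorb)
  moreover have "sparse_sets (Suc m) (Suc k) \<inter> insert (Suc (Suc m)) ` sparse_sets m k = {}"
    by (auto simp: sparse_sets_def)
  ultimately show ?thesis
    by (simp add: sparse_sets_Suc_Suc card_Un_disjoint finite_sparse_sets card_image)
qed

lemma card_sparse_sets: "card (sparse_sets m k) = (m + 1 - k) choose k"
proof (induction m arbitrary: k rule: induct_nat_012)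
  case 0
  have "sparse_sets 0 k = (if k = 0 then {{}} else {})"
    by (auto simp: sparse_sets_def)
  then show ?case by (cases k) auto
next
  case 1
  have "sparse_sets 1 k = (if k = 0 then {{}} else if k = 1 then {{1}} else {})"
    by (auto simp: sparse_sets_def card_1_singleton_iff subset_singleton_iff)
  then show ?case by (cases k) auto
next
  case (ge2 m)
  show ?case
  proof (cases k)
    case 0
    then show ?thesis by (simp add: sparse_sets_0)
  next
    case (Suc j)
    then show ?thesis
      by (cases "j \<le> Suc m") (auto simp: card_sparse_sets_Suc_Suc ge2 Suc_diff_le)
  qed
qed

lemma card_multisets_with_support:
  assumes "finite A" "A \<noteq> {}" "card A \<le> n"
  shows "card {M. size M = n \<and> set_mset M = A} = (n - 1) choose (card A - 1)"
proof -
  have "bij_betw (\<lambda>X. X + mset_set A) (multisets_of_size A (n - card A))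
          {M. size M = n \<and> set_mset M = A}"
  proof (rule bij_betw_byWitness[where f' = "\<lambda>M. M - mset_set A"])
    show "\<forall>M\<in>{M. size M = n \<and> set_mset M = A}. M - mset_set A + mset_set A = M"
      using mset_set_set_mset_msubset subset_mset.diff_add by blast
    show "(\<lambda>M. M - mset_set A) ` {M. size M = n \<and> set_mset M = A}
        \<subseteq> multisets_of_size A (n - card A)"
      by (auto simp: multisets_of_size_def size_Diff_submset[OF mset_set_set_mset_msubset]
          dest: in_diffD)
  qed (use assms in \<open>auto simp: multisets_of_size_def\<close>)
  then have "card {M. size M = n \<and> set_mset M = A} = card (multisets_of_size A (n - card A))"
    by (simp add: bij_betw_same_card)
  also have "\<dots> = (n - 1) choose (n - card A)"
    using assms by (simp add: card_multisets_of_size)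
  also have "\<dots> = (n - 1) choose (card A - 1)"
  proof -
    have "0 < card A" using assms by (simp add: card_gt_0_iff)
    then show ?thesis using assms binomial_symmetric[of "n - card A" "n - 1"] by simp
  qed
  finally show ?thesis .
qed

lemma a_seq_eq_sum:
  assumes "1 \<le> n"
  shows "a_seq n = (\<Sum>k=1..n. ((n + 1 - k) choose k) * ((n - 1) choose (k - 1)))"
proof -
  let ?fibre = "\<lambda>S. {M. size M = n \<and> set_mset M = S}"
  let ?T = "\<Union>k\<in>{1..n}. sparse_sets n k"
  have "{M. size M = n \<and> set_mset M \<subseteq> {1..n} \<and> no_consecutive M} = (\<Union>S\<in>?T. ?fibre S)"
  proof (intro equalityI subsetI)
    fix M assume M: "M \<in> {M. size M = n \<and> set_mset M \<subseteq> {1..n} \<and> no_consecutive M}"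
    then have "M \<noteq> {#}" using assms by auto
    then have "1 \<le> card (set_mset M)" by (simp add: Suc_leI card_gt_0_iff)
    moreover have "card (set_mset M) \<le> n"
      using M card_mono[of "{1..n}" "set_mset M"] by auto
    ultimately have "set_mset M \<in> ?T"
      using M by (auto simp: sparse_sets_def no_consecutive_iff)
    then show "M \<in> (\<Union>S\<in>?T. ?fibre S)" using M by auto
  qed (auto simp: sparse_sets_def no_consecutive_iff)
  then have "a_seq n = card (\<Union>S\<in>?T. ?fibre S)"
    by (simp add: a_seq_def)
  also have "\<dots> = (\<Sum>S\<in>?T. card (?fibre S))"
  proof (rule card_UN_disjoint)
    show "\<forall>S\<in>?T. finite (?fibre S)"
      by (auto intro!: finite_subset[OF _ finite_multisets_of_size[of "{1..n}" n]]
          simp: sparse_sets_def multisets_of_size_def)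
  qed (auto simp: finite_sparse_sets)
  also have "\<dots> = (\<Sum>k=1..n. \<Sum>S\<in>sparse_sets n k. card (?fibre S))"
    by (rule sum.UNION_disjoint) (auto simp: finite_sparse_sets sparse_sets_def)
  also have "\<dots> = (\<Sum>k=1..n. \<Sum>S\<in>sparse_sets n k. (n - 1) choose (k - 1))"
  proof (intro sum.cong refl)
    fix k S assume "k \<in> {1..n}" "S \<in> sparse_sets n k"
    then show "card (?fibre S) = (n - 1) choose (k - 1)"
      by (subst card_multisets_with_support) (auto simp: sparse_sets_def finite_subset)
  qed
  finally show ?thesis by (simp add: card_sparse_sets)
qed

lemma real_binomial_Suc_Suc:
  "real (Suc n choose Suc k) = (real n + 1) / (real k + 1) * real (n choose k)"
proof -
  have "(real n + 1) * real (n choose k) = real (Suc n choose Suc k) * (real k + 1)"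
    by (metis Suc_times_binomial_eq of_nat_Suc of_nat_mult add.commute)
  then show ?thesis by (simp add: field_simps del: binomial_Suc_Suc)
qed

lemma real_binomial_Suc_right:
  "real (n choose Suc k) = (real n - real k) / (real k + 1) * real (n choose k)"
proof -
  have "Suc k * (n choose Suc k) = (n - k) * (n choose k)"
    by (metis binomial_absorb_comp binomial_absorption)
  then have "(real k + 1) * real (n choose Suc k) = real (n - k) * real (n choose k)"
    by (metis of_nat_Suc of_nat_mult add.commute)
  moreover have "real (n - k) * real (n choose k) = (real n - real k) * real (n choose k)"
    by (cases "k \<le> n") (simp_all add: of_nat_diff)
  ultimately show ?thesis by (simp add: field_simps)
qed

lemma real_binomial_pred:
  assumes "0 < n"
  shows "real ((n - 1) choose k) = (real n - real k) / real n * real (n choose k)"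
proof -
  have "real (n - k) * real (n choose k) = real n * real ((n - 1) choose k)"
    by (metis binomial_absorb_comp of_nat_mult)
  moreover have "real (n - k) * real (n choose k) = (real n - real k) * real (n choose k)"
    by (cases "k \<le> n") (simp_all add: of_nat_diff)
  ultimately show ?thesis using assms by (simp add: field_simps)
qed

definition a_term :: "nat \<Rightarrow> nat \<Rightarrow> real" where
  "a_term n k = real ((n + 1 - k) choose k) * real ((n - 1) choose (k - 1))"

text \<open>The certificate produced by Zeilberger's algorithm for the summands \<^const>\<open>a_term\<close>.\<close>

definition a_cert :: "nat \<Rightarrow> nat \<Rightarrow> real" where
  "a_cert n k = (if k < 2 then 0 else
     -2 * (2 * real n - 2 * real k + 3)
        * real ((n - k) choose (k - 2)) * real ((n - 1) choose (k - 1)))"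

context
  notes binomial_Suc_Suc [simp del]
begin

text \<open>
  For n = 2j + m + 2 and k = j + 2, every binomial coefficient in the telescoping identity is a
  rational multiple of C(j+m, j) or of C(2j+m+1, j+1), which reduces the identity to one between
  polynomials in j and m.
\<close>

lemma real_binomials_lower_j_plus_2:
  fixes j m :: nat
  shows "real ((j + m + 2) choose (j + 2))
           = (real j + real m + 1) * (real j + real m + 2) / ((real j + 1) * (real j + 2))
             * real ((j + m) choose j)"
    and "real ((j + m + 1) choose (j + 2))
           = real m * (real j + real m + 1) / ((real j + 1) * (real j + 2))
             * real ((j + m) choose j)"
    and "real ((j + m) choose (j + 2))
           = real m * (real m - 1) / ((real j + 1) * (real j + 2))
             * real ((j + m) choose j)"
proof -
  have lower: "real ((j + m) choose (j + 1)) = real m / (real j + 1) * real ((j + m) choose j)"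
    using real_binomial_Suc_right[of "j + m" j] by simp
  have "real ((j + m + 1) choose (j + 1))
      = (real j + real m + 1) / (real j + 1) * real ((j + m) choose j)"
    using real_binomial_Suc_Suc[of "j + m" j] by (simp add: ac_simps)
  then show "real ((j + m + 2) choose (j + 2))
      = (real j + real m + 1) * (real j + real m + 2) / ((real j + 1) * (real j + 2))
        * real ((j + m) choose j)"
    using real_binomial_Suc_Suc[of "j + m + 1" "j + 1"] by (simp add: ac_simps)
  show "real ((j + m + 1) choose (j + 2))
      = real m * (real j + real m + 1) / ((real j + 1) * (real j + 2)) * real ((j + m) choose j)"
    using real_binomial_Suc_Suc[of "j + m" "j + 1"] lower by (simp add: ac_simps)
  show "real ((j + m) choose (j + 2))
      = real m * (real m - 1) / ((real j + 1) * (real j + 2)) * real ((j + m) choose j)"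
    using real_binomial_Suc_right[of "j + m" "j + 1"] lower by (simp add: ac_simps)
qed

lemma real_binomials_upper_2j_m:
  fixes j m :: nat
  shows "real ((2 * j + m + 2) choose (j + 1))
           = (2 * real j + real m + 2) / (real j + real m + 1)
             * real ((2 * j + m + 1) choose (j + 1))"
    and "real ((2 * j + m) choose (j + 1))
           = (real j + real m) / (2 * real j + real m + 1)
             * real ((2 * j + m + 1) choose (j + 1))"
  using real_binomial_pred[of "2 * j + m + 2" "j + 1"]
    real_binomial_pred[of "2 * j + m + 1" "j + 1"]
  by (simp_all add: field_simps)

lemma real_binomial_product_j_m:
  fixes j m :: nat
  shows "real ((j + m - 1) choose (j + 1)) * real ((2 * j + m + 1) choose (j + 2))
           = real m * (real m - 1) / ((real j + 1) * (real j + 2))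
             * real ((j + m) choose j) * real ((2 * j + m + 1) choose (j + 1))"
proof -
  have absorb: "real ((j + m - 1) choose (j + 1)) * (real j + real m)
      = (real m - 1) * real ((j + m) choose (j + 1))"
  proof (cases "m = 0")
    case False
    have "(m - 1) * ((j + m) choose (j + 1)) = (j + m) * ((j + m - 1) choose (j + 1))"
      using binomial_absorb_comp[of "j + m" "j + 1"] by simp
    then have "real (m - 1) * real ((j + m) choose (j + 1))
        = real (j + m) * real ((j + m - 1) choose (j + 1))"
      by (metis of_nat_mult)
    then show ?thesis using False by (simp add: of_nat_diff algebra_simps)
  qed (simp add: binomial_eq_0)
  have "real ((2 * j + m + 1) choose (j + 2))
      = (real j + real m) / (real j + 2) * real ((2 * j + m + 1) choose (j + 1))"
    using real_binomial_Suc_right[of "2 * j + m + 1" "j + 1"] by (simp add: add_ac)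
  then have "real ((j + m - 1) choose (j + 1)) * real ((2 * j + m + 1) choose (j + 2))
      = real ((j + m - 1) choose (j + 1)) * (real j + real m)
        * real ((2 * j + m + 1) choose (j + 1)) / (real j + 2)"
    by simp
  also have "\<dots> = (real m - 1) * real ((j + m) choose (j + 1))
        * real ((2 * j + m + 1) choose (j + 1)) / (real j + 2)"
    by (simp only: absorb)
  finally show ?thesis
    using real_binomial_Suc_right[of "j + m" j] by simp
qed

lemma a_term_telescoping_generic:
  fixes j m :: nat
  defines "n \<equiv> 2 * j + m + 2" and "k \<equiv> j + 2"
  shows "(real n + 1) * a_term (n + 1) k - 2 * (real n + 1) * a_term n k
           - 3 * (real n - 1) * a_term (n - 1) k = a_cert n (k + 1) - a_cert n k"
proof -
  have terms:
    "a_term (n + 1) k = real ((j + m + 2) choose (j + 2)) * real ((2 * j + m + 2) choose (j + 1))"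
    "a_term n k = real ((j + m + 1) choose (j + 2)) * real ((2 * j + m + 1) choose (j + 1))"
    "a_term (n - 1) k = real ((j + m) choose (j + 2)) * real ((2 * j + m) choose (j + 1))"
    "a_cert n (k + 1) = -2 * (2 * real j + 2 * real m + 1)
        * (real ((j + m - 1) choose (j + 1)) * real ((2 * j + m + 1) choose (j + 2)))"
    "a_cert n k = -2 * (2 * real j + 2 * real m + 3)
        * real ((j + m) choose j) * real ((2 * j + m + 1) choose (j + 1))"
    by (simp_all add: a_term_def a_cert_def n_def k_def)
  have "real j + 1 \<noteq> 0" "real j + 2 \<noteq> 0" "real j + real m + 1 \<noteq> 0" "2 * real j + real m + 1 \<noteq> 0"
    by linarith+
  then show ?thesis
    unfolding terms real_binomials_lower_j_plus_2 real_binomials_upper_2j_m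
      real_binomial_product_j_m
    by (simp add: n_def divide_simps) (simp add: algebra_simps)
qed

lemma a_term_telescoping:
  assumes "1 \<le> n" "1 \<le> k"
  shows "(real n + 1) * a_term (n + 1) k - 2 * (real n + 1) * a_term n k
           - 3 * (real n - 1) * a_term (n - 1) k = a_cert n (k + 1) - a_cert n k"
proof -
  have "k = 1 \<or> (\<exists>j. k = j + 2)"
    using assms(2) by presburger
  then consider "k = 1" | j where "k = j + 2"
    by blast
  then show ?thesis
  proof cases
    case 1
    with assms(1) show ?thesis
      by (simp add: a_term_def a_cert_def of_nat_diff algebra_simps)
  next
    case (2 j)
    show ?thesis
    proof (cases "n < 2 * j + 2")
      case True
      \<comment> \<open>all binomial coefficients involved vanish\<close>
      with 2 assms(1) show ?thesis
        by (simp add: a_term_def a_cert_def binomial_eq_0) linarith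
    next
      case False
      then have "\<exists>m. n = 2 * j + m + 2"
        by presburger
      then obtain m where "n = 2 * j + m + 2" ..
      with 2 show ?thesis
        using a_term_telescoping_generic by simp
    qed
  qed
qed

end

lemma a_term_eq_0: "m < k \<Longrightarrow> a_term m k = 0"
  by (cases m) (simp_all add: a_term_def binomial_eq_0)

lemma a_seq_eq_sum_a_term:
  assumes "1 \<le> m" "m \<le> N"
  shows "real (a_seq m) = (\<Sum>k=1..N. a_term m k)"
proof -
  have "real (a_seq m) = (\<Sum>k=1..m. a_term m k)"
    using assms(1) by (simp add: a_seq_eq_sum a_term_def)
  also have "\<dots> = (\<Sum>k=1..N. a_term m k)"
    using assms(2) by (intro sum.mono_neutral_left) (auto simp: a_term_eq_0)
  finally show ?thesis .
qed

lemma a_seq_recurrence: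
  assumes "1 \<le> n"
  shows "(real n + 1) * a_seq (n + 1)
           = 2 * (real n + 1) * a_seq n + 3 * (real n - 1) * a_seq (n - 1)"
proof -
  have "(\<Sum>k=1..n+1. (real n + 1) * a_term (n + 1) k - 2 * (real n + 1) * a_term n k
           - 3 * (real n - 1) * a_term (n - 1) k) = (\<Sum>k=1..n+1. a_cert n (Suc k) - a_cert n k)"
    using a_term_telescoping[OF assms] by (intro sum.cong refl) simp
  also have "\<dots> = a_cert n (n + 2) - a_cert n 1"
    by (subst sum_Suc_diff) simp_all
  also have "\<dots> = 0"
    using assms by (simp add: a_cert_def)
  finally have summed: "(real n + 1) * (\<Sum>k=1..n+1. a_term (n + 1) k)
      = 2 * (real n + 1) * (\<Sum>k=1..n+1. a_term n k)
        + 3 * (real n - 1) * (\<Sum>k=1..n+1. a_term (n - 1) k)"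
    by (simp only: sum_subtractf sum_distrib_left[symmetric])
  have third: "3 * (real n - 1) * a_seq (n - 1) = 3 * (real n - 1) * (\<Sum>k=1..n+1. a_term (n - 1) k)"
  proof (cases "n = 1")
    case False
    then show ?thesis using assms by (simp only: a_seq_eq_sum_a_term[of "n - 1" "n + 1"])
  qed simp
  have first: "real (a_seq (n + 1)) = (\<Sum>k=1..n+1. a_term (n + 1) k)"
    and second: "real (a_seq n) = (\<Sum>k=1..n+1. a_term n k)"
    using assms by (simp_all only: a_seq_eq_sum_a_term)
  show ?thesis
    unfolding third first second by (rule summed)
qed

lemma fps_eq_const_times_1_plus_X:
  fixes V :: "'a :: field_char_0 fps"
  assumes "(1 + fps_X) * fps_deriv V = V"
  shows "V = fps_const (fps_nth V 0) * (1 + fps_X)"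
proof -
  define c where "c = fps_nth V 0"
  have step: "fps_nth V (Suc n) = (1 - of_nat n) / of_nat (Suc n) * fps_nth V n" for n
  proof -
    have "of_nat (Suc n) * fps_nth V (Suc n) + of_nat n * fps_nth V n = fps_nth V n"
      using arg_cong[OF assms, of "\<lambda>F. fps_nth F n"]
      by (cases n) (simp_all add: distrib_right)
    then show ?thesis
      by (simp add: field_simps del: of_nat_Suc)
  qed
  have "fps_nth V n = (if n \<le> 1 then c else 0)" for n
    by (induction n) (auto simp: step le_Suc_eq c_def)
  then show ?thesis
    unfolding c_def[symmetric] by (intro fps_ext) simp
qed

locale sqrt_gf_recurrence =
  fixes u :: "nat \<Rightarrow> real"
  assumes u0: "u 0 = 1" and u1: "u 1 = 2"
    and u_rec: "\<And>n. 1 \<le> n \<Longrightarrow>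
      (real n + 1) * u (n + 1) = 2 * (real n + 1) * u n + 3 * (real n - 1) * u (n - 1)"
begin

lemma fps_ode: "(1 - 2 * fps_X - 3 * fps_X ^ 2) * fps_deriv (Abs_fps u) = 2 * Abs_fps u"
proof (rule fps_ext)
  fix n
  have coeff: "fps_nth ((1 - 2 * fps_X - 3 * fps_X ^ 2) * F) n
      = fps_nth F n - (if n = 0 then 0 else 2 * fps_nth F (n - 1))
          - (if n < 2 then 0 else 3 * fps_nth F (n - 2))"
    for F :: "real fps"
  proof -
    have "(1 - 2 * fps_X - 3 * fps_X ^ 2) * F = F - 2 * (fps_X * F) - 3 * (fps_X ^ 2 * F)"
      by (simp add: algebra_simps)
    then show ?thesis by (simp add: fps_X_power_mult_nth fps_X_mult_nth)
  qed
  have rhs: "fps_nth (2 * Abs_fps u) n = 2 * u n"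
    by (simp add: numeral_fps_const)
  consider "n = 0" | "n = 1" | m where "n = m + 2"
    by (metis One_nat_def add_2_eq_Suc' not0_implies_Suc)
  then show "fps_nth ((1 - 2 * fps_X - 3 * fps_X ^ 2) * fps_deriv (Abs_fps u)) n
      = fps_nth (2 * Abs_fps u) n"
  proof cases
    case 1
    then show ?thesis using u1 by (simp add: coeff u0)
  next
    case 2
    then show ?thesis using u_rec[of 1] u1 by (simp add: coeff u0 numeral_2_eq_2 fps_numeral_nth)
  next
    case 3
    then show ?thesis
      using u_rec[of "m + 2"] unfolding coeff rhs by (simp add: numeral_2_eq_2 algebra_simps)
  qed
qed

lemma fps_square_identity: "Abs_fps u * Abs_fps u * (1 - 3 * fps_X) = 1 + fps_X"
proof -
  let ?U = "Abs_fps u"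
  define V where "V = ?U * ?U * (1 - 3 * fps_X)"
  have "(1 + fps_X) * fps_deriv V
      = 2 * ?U * ((1 - 2 * fps_X - 3 * fps_X ^ 2) * fps_deriv ?U) - 3 * (1 + fps_X) * (?U * ?U)"
    by (simp add: V_def fps_deriv_mult algebra_simps power2_eq_square)
  also have "\<dots> = 2 * ?U * (2 * ?U) - 3 * (1 + fps_X) * (?U * ?U)"
    unfolding fps_ode ..
  also have "\<dots> = V"
    by (simp add: V_def algebra_simps)
  finally have "V = fps_const (fps_nth V 0) * (1 + fps_X)"
    by (rule fps_eq_const_times_1_plus_X)
  then show ?thesis
    by (simp add: V_def u0)
qed

lemma abs_le_power_3: "\<bar>u n\<bar> \<le> 3 ^ n"
proof (induction n rule: induct_nat_012)
  case (ge2 m)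
  have "(real m + 2) * u (m + 2) = 2 * (real m + 2) * u (m + 1) + 3 * real m * u m"
    using u_rec[of "m + 1"] by (simp add: algebra_simps)
  then have "(real m + 2) * \<bar>u (m + 2)\<bar> = \<bar>2 * (real m + 2) * u (m + 1) + 3 * real m * u m\<bar>"
    by (metis abs_mult abs_of_nonneg of_nat_0_le_iff add_nonneg_nonneg zero_le_numeral)
  also have "\<dots> \<le> 2 * (real m + 2) * \<bar>u (m + 1)\<bar> + 3 * real m * \<bar>u m\<bar>"
    by (rule order_trans[OF abs_triangle_ineq]) (simp add: abs_mult)
  also have "\<dots> \<le> 2 * (real m + 2) * 3 ^ (m + 1) + 3 * real m * 3 ^ m"
    using ge2 by (intro add_mono mult_left_mono) auto
  also have "\<dots> \<le> (real m + 2) * 3 ^ (m + 2)"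
    by (simp add: algebra_simps)
  finally show ?case
    by (simp add: mult_le_cancel_left_pos)
qed (use u0 u1 in simp_all)

lemma norm_less_fps_conv_radius:
  fixes z :: real
  assumes "\<bar>z\<bar> < 1 / 4"
  shows "ereal (norm z) < fps_conv_radius (Abs_fps u)"
proof -
  have "summable (\<lambda>n. u n * (1 / 4) ^ n)"
  proof (rule summable_comparison_test')
    show "summable (\<lambda>n. (3 / 4 :: real) ^ n)" by simp
    show "norm (u n * (1 / 4) ^ n) \<le> (3 / 4) ^ n" for n
      using abs_le_power_3[of n] by (simp add: abs_mult power_divide divide_right_mono)
  qed
  then have "ereal (1 / 4) \<le> fps_conv_radius (Abs_fps u)"
    unfolding fps_conv_radius_def using conv_radius_geI[of "\<lambda>n. u n" "1 / 4 :: real"] by simp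
  moreover have "ereal (norm z) < ereal (1 / 4)"
    using assms by simp
  ultimately show ?thesis
    by (rule order_less_le_trans[rotated])
qed

lemma sums_eval_fps_Abs_fps: "\<bar>z :: real\<bar> < 1 / 4 \<Longrightarrow> (\<lambda>n. u n * z ^ n) sums eval_fps (Abs_fps u) z"
  using sums_eval_fps[OF norm_less_fps_conv_radius] by simp

lemma eval_fps_Abs_fps_square:
  fixes z :: real
  assumes "\<bar>z\<bar> < 1 / 4"
  shows "eval_fps (Abs_fps u) z ^ 2 * (1 - 3 * z) = 1 + z"
proof -
  have polys: "fps_of_poly [:1, -3:] = (1 - 3 * fps_X :: real fps)"
    "fps_of_poly [:1, 1:] = (1 + fps_X :: real fps)"
    by (simp_all add: fps_of_poly_pCons)
  have "eval_fps (Abs_fps u * Abs_fps u * fps_of_poly [:1, -3:]) z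
      = eval_fps (fps_of_poly [:1, 1:]) z"
    unfolding polys using fps_square_identity by simp
  then show ?thesis
    using norm_less_fps_conv_radius[OF assms] fps_conv_radius_mult[of "Abs_fps u" "Abs_fps u"]
    by (simp add: eval_fps_mult order_less_le_trans mult.commute power2_eq_square)
qed

lemma eval_fps_Abs_fps_pos:
  fixes z :: real
  assumes z: "\<bar>z\<bar> < 1 / 6"
  shows "eval_fps (Abs_fps u) z > 0"
proof -
  have "(\<lambda>n. u (Suc n) * z ^ Suc n) sums (eval_fps (Abs_fps u) z - 1)"
    using sums_Suc_iff[of "\<lambda>n. u n * z ^ n"] sums_eval_fps_Abs_fps[of z] z u0 by simp
  moreover have geometric: "(\<lambda>n. 3 * \<bar>z\<bar> * (3 * \<bar>z\<bar>) ^ n) sums (3 * \<bar>z\<bar> / (1 - 3 * \<bar>z\<bar>))"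
    using sums_mult[OF geometric_sums[of "3 * \<bar>z\<bar>"], of "3 * \<bar>z\<bar>"] z by simp
  moreover have bound: "norm (u (Suc n) * z ^ Suc n) \<le> 3 * \<bar>z\<bar> * (3 * \<bar>z\<bar>) ^ n" for n
  proof -
    have "norm (u (Suc n) * z ^ Suc n) = \<bar>u (Suc n)\<bar> * \<bar>z\<bar> ^ Suc n"
      by (simp add: abs_mult power_abs)
    also have "\<dots> \<le> 3 ^ Suc n * \<bar>z\<bar> ^ Suc n"
      by (intro mult_right_mono abs_le_power_3 zero_le_power abs_ge_zero)
    also have "\<dots> = 3 * \<bar>z\<bar> * (3 * \<bar>z\<bar>) ^ n"
      by (simp add: power_mult_distrib)
    finally show ?thesis .
  qed
  ultimately have "\<bar>eval_fps (Abs_fps u) z - 1\<bar> \<le> 3 * \<bar>z\<bar> / (1 - 3 * \<bar>z\<bar>)"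
    using norm_suminf_le[OF bound sums_summable[OF geometric]] by (simp add: sums_iff)
  also have "\<dots> < 1"
    using z by (simp add: field_simps)
  finally show ?thesis by linarith
qed

lemma sums_sqrt:
  fixes z :: real
  assumes z: "\<bar>z\<bar> < 1 / 6"
  shows "(\<lambda>n. u n * z ^ n) sums (sqrt (1 - 2 * z - 3 * z ^ 2) / (1 - 3 * z))"
proof -
  define w where "w = eval_fps (Abs_fps u) z"
  have "(w * (1 - 3 * z)) ^ 2 = (w ^ 2 * (1 - 3 * z)) * (1 - 3 * z)"
    by (simp add: power2_eq_square)
  also have "\<dots> = (1 + z) * (1 - 3 * z)"
    using eval_fps_Abs_fps_square[of z] z by (simp add: w_def)
  also have "\<dots> = 1 - 2 * z - 3 * z ^ 2"
    by (simp add: algebra_simps power2_eq_square)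
  finally have "sqrt (1 - 2 * z - 3 * z ^ 2) = w * (1 - 3 * z)"
    by (rule real_sqrt_unique) (use eval_fps_Abs_fps_pos[OF z] z in \<open>simp add: w_def\<close>)
  then show ?thesis
    using sums_eval_fps_Abs_fps[of z] z by (simp add: w_def)
qed

end

lemma sqrt_gf_recurrence_a_seq:
  "sqrt_gf_recurrence (\<lambda>n. if n = 0 then 1 else 2 * real (a_seq n))"
proof (unfold_locales, goal_cases)
  case 2
  show ?case using a_seq_eq_sum[of 1] by simp
next
  case (3 n)
  \<comment> \<open>for n = 1 the value at 0, where u is not 2 a_seq, carries the factor n - 1 = 0\<close>
  then show ?case
    using a_seq_recurrence[OF 3] by (cases "n = 1") (auto simp: algebra_simps)
qed simp

theorem theorem3:
  shows "\<exists>r>0. \<forall>z::real. \<bar>z\<bar> < r \<longrightarrow>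
    (\<lambda>n. real (a_seq (Suc n)) * z ^ Suc n) sums
      ((1 - 3*z - sqrt (1 - 2*z - 3*z^2)) / (6*z - 2))"
proof (intro exI[of _ "1 / 6"] conjI allI impI)
  define u where "u = (\<lambda>n. if n = 0 then 1 else 2 * real (a_seq n))"
  interpret sqrt_gf_recurrence u
    unfolding u_def by (rule sqrt_gf_recurrence_a_seq)
  fix z :: real
  assume z: "\<bar>z\<bar> < 1 / 6"
  define g where "g = sqrt (1 - 2 * z - 3 * z ^ 2) / (1 - 3 * z)"
  have "(\<lambda>n. u (Suc n) * z ^ Suc n / 2) sums ((g - 1) / 2)"
    using sums_sqrt[OF z] sums_Suc_iff[of "\<lambda>n. u n * z ^ n"]
    by (intro sums_divide) (simp add: g_def u0)
  moreover have "(g - 1) / 2 = (1 - 3*z - sqrt (1 - 2*z - 3*z^2)) / (6*z - 2)"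
    using z by (simp add: g_def field_simps)
  ultimately show "(\<lambda>n. real (a_seq (Suc n)) * z ^ Suc n) sums
      ((1 - 3*z - sqrt (1 - 2*z - 3*z^2)) / (6*z - 2))"
    by (simp add: u_def)
qed simp

end
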